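(* Let $\mathbb{X}$ be a real Banach space such that $\operatorname{Sm}\mathbb{X}$ is a dense $G_\delta$ subset of $\mathbb{X}$, and let $H=\{x\in\mathbb{X}:\varphi(x)=c\}$ be a hyperplane not passing through the origin (with $\varphi$ a non-zero bounded linear functional and $c\neq0$). If a bounded linear operator $T:\mathbb{X}\to\mathbb{X}$ preserves Birkhoff–James orthogonality at each point of $H$, then $T$ is a scalar multiple of an isometry.
   Context: $u\perp_B v$ means $\|u+\lambda v\|\ge\|u\|$ for all real $\lambda$. $T$ preserves Birkhoff–James orthogonality at $x$ if $x\perp_B v$ implies $Tx\perp_B Tv$ for all $v$. For non-zero $z$, $J(z)=\{f\in\mathbb{X}^*:\|f\|=1,\ f(z)=\|z\|\}$; $z$ is smooth if $J(z)$ is a singleton; $\operatorname{Sm}\mathbb{X}$ is the set of smooth points. "Scalar multiple of an isometry": there is $\lambda\ge0$ with $\|Tx\|=\lambda\|x\|$ for all $x$. *)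

theory Defs
  imports "HOL-Analysis.Analysis"
begin

definition bj_orth :: "'a::real_normed_vector \<Rightarrow> 'a \<Rightarrow> bool" where
  "bj_orth u v \<longleftrightarrow> (\<forall>t::real. norm (u + t *\<^sub>R v) \<ge> norm u)"

definition preserves_bj_at :: "('a::real_normed_vector \<Rightarrow> 'a) \<Rightarrow> 'a \<Rightarrow> bool" where
  "preserves_bj_at T x \<longleftrightarrow> (\<forall>v. bj_orth x v \<longrightarrow> bj_orth (T x) (T v))"

definition supp_funcs :: "'a::real_normed_vector \<Rightarrow> ('a \<Rightarrow> real) set" where
  "supp_funcs z = {f. bounded_linear f \<and> onorm f = 1 \<and> f z = norm z}"

definition smooth_point :: "'a::real_normed_vector \<Rightarrow> bool" where
  "smooth_point z \<longleftrightarrow> z \<noteq> 0 \<and> (\<exists>f. supp_funcs z = {f})"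

definition smooth_points :: "'a::real_normed_vector set" where
  "smooth_points = {z. smooth_point z}"

end

theory Submission
  imports Defs
begin

text \<open>
  Birkhoff--James orthogonality at \<open>x\<close> depends only on the line through \<open>x\<close>, so \<open>T\<close>
  preserves it at every point off \<open>ker \<phi>\<close>, in particular on the open half-space \<open>\<phi> > 0\<close>.
  Parametrise a segment in that half-space as \<open>z\<^sub>t = x + t d\<close>. The norm is convex in \<open>t\<close>,
  and a supporting slope \<open>\<beta>\<^sub>t\<close> at \<open>z\<^sub>t\<close> makes \<open>z\<^sub>t\<close> orthogonal to a vector pointing to a
  positive multiple of a nearby \<open>z\<^sub>s\<close>. Preservation then bounds \<open>\<parallel>T z\<^sub>t\<parallel>/\<parallel>z\<^sub>t\<parallel>\<close> by
  \<open>\<parallel>T z\<^sub>s\<parallel>/\<parallel>z\<^sub>s\<parallel>\<close> up to an error \<open>M (s - t)(\<beta>\<^sub>s - \<beta>\<^sub>t)\<close>; these errors telescope over a fine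
  subdivision, so \<open>\<parallel>T z\<parallel>/\<parallel>z\<parallel>\<close> is constant on the half-space, hence on the dense set
  \<open>\<phi> \<noteq> 0\<close>, and by continuity everywhere.
\<close>

lemma convex_on_norm_line:
  fixes x d :: "'a::real_normed_vector"
  shows "convex_on UNIV (\<lambda>u. norm (x + u *\<^sub>R d))"
proof (rule convex_onI)
  fix t a b :: real
  assume t: "0 < t" "t < 1"
  have "x + ((1 - t) *\<^sub>R a + t *\<^sub>R b) *\<^sub>R d = (1 - t) *\<^sub>R (x + a *\<^sub>R d) + t *\<^sub>R (x + b *\<^sub>R d)"
    by (simp add: algebra_simps)
  also have "norm \<dots> \<le> (1 - t) * norm (x + a *\<^sub>R d) + t * norm (x + b *\<^sub>R d)"
    using t by (smt (verit) norm_scaleR norm_triangle_ineq)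
  finally show "norm (x + ((1 - t) *\<^sub>R a + t *\<^sub>R b) *\<^sub>R d) \<le> (1 - t) * norm (x + a *\<^sub>R d) + t * norm (x + b *\<^sub>R d)" .
qed simp

lemma bj_orth_if_local_min:
  fixes z v :: "'a::real_normed_vector"
  assumes "\<delta> > 0" and "\<And>l. \<bar>l\<bar> < \<delta> \<Longrightarrow> norm z \<le> norm (z + l *\<^sub>R v)"
  shows "bj_orth z v"
proof -
  have "\<forall>l\<in>UNIV. norm (z + 0 *\<^sub>R v) \<le> norm (z + l *\<^sub>R v)"
    by (rule convex_local_global_minimum[OF \<open>\<delta> > 0\<close> convex_on_norm_line])
      (use assms(2) in \<open>auto simp: dist_real_def\<close>)
  then show ?thesis
    by (simp add: bj_orth_def)
qed

lemma bj_orth_scaleR_left_iff: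
  assumes "r \<noteq> 0"
  shows "bj_orth (r *\<^sub>R u) v \<longleftrightarrow> bj_orth u v"
proof -
  have scale: "r *\<^sub>R u + l *\<^sub>R v = r *\<^sub>R (u + (l / r) *\<^sub>R v)" for l
    using assms by (simp add: algebra_simps)
  have "bj_orth (r *\<^sub>R u) v \<longleftrightarrow> (\<forall>l. norm u \<le> norm (u + (l / r) *\<^sub>R v))"
    using assms unfolding bj_orth_def scale by simp
  also have "\<dots> \<longleftrightarrow> bj_orth u v"
    unfolding bj_orth_def using assms by (metis nonzero_mult_div_cancel_left)
  finally show ?thesis .
qed

lemma preserves_bj_at_scaleR:
  assumes "linear T" and "r \<noteq> 0" and "preserves_bj_at T x"
  shows "preserves_bj_at T (r *\<^sub>R x)"
  using assms by (simp add: preserves_bj_at_def bj_orth_scaleR_left_iff linear_scale)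

lemma preserves_bj_at_off_kernel:
  fixes \<phi> :: "'a::real_normed_vector \<Rightarrow> real"
  assumes "linear T" and "linear \<phi>" and "c \<noteq> 0"
    and "\<forall>x\<in>{x. \<phi> x = c}. preserves_bj_at T x" and "\<phi> z \<noteq> 0"
  shows "preserves_bj_at T z"
proof -
  have "\<phi> ((c / \<phi> z) *\<^sub>R z) = c"
    using assms(2,5) by (simp add: linear_scale)
  then have "preserves_bj_at T ((c / \<phi> z) *\<^sub>R z)"
    using assms(4) by blast
  from preserves_bj_at_scaleR[OF assms(1) _ this, of "\<phi> z / c"]
  show ?thesis
    using assms(3,5) by simp
qed

lemma convex_on_UNIV_supporting_slope:
  fixes f :: "real \<Rightarrow> real"
  assumes "convex_on UNIV f"
  obtains \<beta> where "\<And>u. f t + \<beta> * (u - t) \<le> f u"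
proof -
  define Q where "Q = (\<lambda>\<tau>. (f (t + \<tau>) - f t) / \<tau>)"
  have slopes: "(f t - f (t - \<sigma>)) / \<sigma> \<le> Q \<tau>" if "\<sigma> > 0" "\<tau> > 0" for \<sigma> \<tau>
    using convex_on_slope_le[OF assms, of "t - \<sigma>" "t + \<tau>" t] that
    by (simp add: Q_def) (smt (verit) minus_diff_eq minus_divide_left)
  define \<beta> where "\<beta> = Inf (Q ` {0<..})"
  have "bdd_below (Q ` {0<..})"
    using slopes[of 1] by (intro bdd_belowI) auto
  then have right: "\<beta> \<le> Q \<tau>" if "\<tau> > 0" for \<tau>
    unfolding \<beta>_def using that by (intro cInf_lower) auto
  have left: "(f t - f (t - \<sigma>)) / \<sigma> \<le> \<beta>" if "\<sigma> > 0" for \<sigma>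
    unfolding \<beta>_def using slopes that by (intro cInf_greatest) auto
  have "f t + \<beta> * (u - t) \<le> f u" for u
  proof (cases u t rule: linorder_cases)
    case less
    then show ?thesis
      using left[of "t - u"] by (simp add: field_simps)
  next
    case greater
    then show ?thesis
      using right[of "u - t"] by (simp add: Q_def field_simps)
  qed simp
  then show ?thesis
    by (rule that)
qed

lemma norm_line_supporting_slopes:
  fixes x d :: "'a::real_normed_vector"
  obtains \<beta> where "\<And>t. \<bar>\<beta> t\<bar> \<le> norm d"
    and "\<And>t u. norm (x + t *\<^sub>R d) + \<beta> t * u \<le> norm (x + (t + u) *\<^sub>R d)"
proof -
  have "\<exists>b. \<bar>b\<bar> \<le> norm d \<and> (\<forall>u. norm (x + t *\<^sub>R d) + b * u \<le> norm (x + (t + u) *\<^sub>R d))" for t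
  proof -
    obtain b where b: "\<And>u. norm (x + t *\<^sub>R d) + b * (u - t) \<le> norm (x + u *\<^sub>R d)"
      using convex_on_UNIV_supporting_slope[OF convex_on_norm_line] by blast
    have "norm (x + (t + 1) *\<^sub>R d) \<le> norm (x + t *\<^sub>R d) + norm d"
      and "norm (x + (t - 1) *\<^sub>R d) \<le> norm (x + t *\<^sub>R d) + norm d"
      using norm_triangle_ineq[of "x + t *\<^sub>R d" d] norm_triangle_ineq4[of "x + t *\<^sub>R d" d]
      by (simp_all add: algebra_simps)
    with b[of "t + 1"] b[of "t - 1"] have "\<bar>b\<bar> \<le> norm d"
      by simp
    with b[of "t + _"] show ?thesis
      by auto
  qed
  then show ?thesis
    using that by metis
qed

text \<open>
  Rescaling \<open>x + s d\<close> by \<open>\<parallel>x\<parallel> / (\<parallel>x\<parallel> + s \<beta>)\<close> puts it on the tangent line at \<open>x\<close> given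
  by the supporting slope \<open>\<beta>\<close>; convexity makes \<open>x\<close> orthogonal to the direction of that line.
\<close>
lemma bj_orth_to_tangent_point:
  fixes x d :: "'a::real_normed_vector"
  assumes support: "\<And>u. norm x + \<beta> * u \<le> norm (x + u *\<^sub>R d)"
    and L: "norm x + s * \<beta> > 0"
  shows "bj_orth x ((norm x / (norm x + s * \<beta>)) *\<^sub>R (x + s *\<^sub>R d) - x)"
proof -
  define c where "c = norm x / (norm x + s * \<beta>)"
  have cL: "c * (norm x + s * \<beta>) = norm x"
    using L by (simp add: c_def)
  show ?thesis
    unfolding c_def[symmetric]
  proof (rule bj_orth_if_local_min)
    show "0 < 1 / (\<bar>c - 1\<bar> + 1)"
      by simp
  next
    fix l :: real
    assume l: "\<bar>l\<bar> < 1 / (\<bar>c - 1\<bar> + 1)"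
    define \<gamma> where "\<gamma> = 1 + l * (c - 1)"
    have "\<bar>l * (c - 1)\<bar> \<le> \<bar>l\<bar> * (\<bar>c - 1\<bar> + 1)"
      by (simp add: abs_mult mult_left_mono)
    also have "\<dots> < 1"
      using l by (simp add: field_simps)
    finally have \<gamma>: "\<gamma> > 0"
      unfolding \<gamma>_def by linarith
    have "\<gamma> *\<^sub>R (x + (l * c * s / \<gamma>) *\<^sub>R d) = \<gamma> *\<^sub>R x + (l * c * s) *\<^sub>R d"
      using \<gamma> by (simp add: scaleR_add_right)
    also have "\<dots> = x + l *\<^sub>R (c *\<^sub>R (x + s *\<^sub>R d) - x)"
      by (simp add: \<gamma>_def algebra_simps)
    finally have "x + l *\<^sub>R (c *\<^sub>R (x + s *\<^sub>R d) - x) = \<gamma> *\<^sub>R (x + (l * c * s / \<gamma>) *\<^sub>R d)" ..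
    then have "norm (x + l *\<^sub>R (c *\<^sub>R (x + s *\<^sub>R d) - x)) = \<gamma> * norm (x + (l * c * s / \<gamma>) *\<^sub>R d)"
      using \<gamma> by simp
    also have "\<dots> \<ge> \<gamma> * (norm x + \<beta> * (l * c * s / \<gamma>))"
      using \<gamma> support[of "l * c * s / \<gamma>"] by (intro mult_left_mono) auto
    moreover have "\<gamma> * (norm x + \<beta> * (l * c * s / \<gamma>)) = norm x + l * (c * (norm x + s * \<beta>) - norm x)"
      using \<gamma> by (simp add: \<gamma>_def field_simps)
    ultimately show "norm x \<le> norm (x + l *\<^sub>R (c *\<^sub>R (x + s *\<^sub>R d) - x))"
      by (simp add: cL)
  qed
qed

lemma norm_ratio_step:
  fixes T :: "'a::real_normed_vector \<Rightarrow> 'a"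
  assumes T: "linear T" and C: "\<And>v. norm (T v) \<le> C * norm v"
    and pres: "preserves_bj_at T (x + t *\<^sub>R d)"
    and support_t: "\<And>u. norm (x + t *\<^sub>R d) + \<beta> * u \<le> norm (x + (t + u) *\<^sub>R d)"
    and support_s: "\<And>u. norm (x + s *\<^sub>R d) + \<beta>' * u \<le> norm (x + (s + u) *\<^sub>R d)"
    and l: "0 < l" "l \<le> norm (x + t *\<^sub>R d) + (s - t) * \<beta>"
  shows "norm (T (x + t *\<^sub>R d)) / norm (x + t *\<^sub>R d)
    \<le> norm (T (x + s *\<^sub>R d)) / norm (x + s *\<^sub>R d) + C / l * (s - t) * (\<beta>' - \<beta>)"
proof -
  define z where "z = x + t *\<^sub>R d"
  define y where "y = x + s *\<^sub>R d"
  define L where "L = norm z + (s - t) * \<beta>"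
  have L: "L > 0" "l \<le> L"
    using l by (simp_all add: L_def z_def)
  have line: "x + (t + u) *\<^sub>R d = z + u *\<^sub>R d" for u
    by (simp add: z_def algebra_simps)
  have "bj_orth z ((norm z / L) *\<^sub>R (z + (s - t) *\<^sub>R d) - z)"
    unfolding L_def using support_t L(1) by (intro bj_orth_to_tangent_point) (simp_all add: L_def line z_def)
  moreover have "z + (s - t) *\<^sub>R d = y"
    by (simp add: z_def y_def algebra_simps)
  ultimately have "bj_orth (T z) (T ((norm z / L) *\<^sub>R y - z))"
    using pres by (simp add: preserves_bj_at_def z_def)
  then have "norm (T z) \<le> norm (T z + T ((norm z / L) *\<^sub>R y - z))"
    unfolding bj_orth_def by (metis scaleR_one)
  also have "\<dots> = norm z / L * norm (T y)"
    using L by (simp add: T linear_diff linear_scale)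
  finally have ratio_z: "norm (T z) / norm z \<le> norm (T y) / L"
    using L by (cases "z = 0") (simp_all add: field_simps)
  have gap: "0 \<le> norm y - L"
    using support_t[of "s - t"] by (simp add: L_def y_def z_def mult.commute)
  then have "norm y > 0"
    using L by linarith
  with C[of y] have ratio_y: "0 \<le> norm (T y) / norm y" "norm (T y) / norm y \<le> C"
    by (simp_all add: pos_divide_le_eq mult.commute)
  then have "0 \<le> C"
    by linarith
  have "norm (T y) / norm y * (norm y - L) / L \<le> C * (norm y - L) / L"
    using ratio_y gap L by (intro divide_right_mono mult_right_mono) auto
  also have "\<dots> \<le> C * (norm y - L) / l"
    using \<open>0 \<le> C\<close> gap L l by (intro divide_left_mono mult_nonneg_nonneg) auto
  also have "\<dots> \<le> C * ((s - t) * (\<beta>' - \<beta>)) / l"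
  proof -
    have "norm y - L \<le> (s - t) * (\<beta>' - \<beta>)"
      using support_s[of "t - s"] by (simp add: L_def y_def z_def algebra_simps)
    then show ?thesis
      using \<open>0 \<le> C\<close> l by (intro divide_right_mono mult_left_mono) auto
  qed
  finally have "norm (T y) / norm y * (norm y - L) / L \<le> C / l * (s - t) * (\<beta>' - \<beta>)"
    by simp
  moreover have "norm (T y) / L = norm (T y) / norm y + norm (T y) / norm y * (norm y - L) / L"
    using L \<open>norm y > 0\<close> by (simp add: field_simps)
  ultimately show ?thesis
    using ratio_z by (simp add: y_def z_def)
qed

lemma le_by_fine_steps:
  fixes R \<beta> :: "real \<Rightarrow> real"
  assumes "\<delta> > 0" and \<beta>: "\<And>t. t \<in> {0..1} \<Longrightarrow> \<bar>\<beta> t\<bar> \<le> B"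
    and step: "\<And>t s. 0 \<le> t \<Longrightarrow> t \<le> s \<Longrightarrow> s \<le> 1 \<Longrightarrow> s - t \<le> \<delta> \<Longrightarrow>
      R t \<le> R s + M * (s - t) * (\<beta> s - \<beta> t)"
  shows "R 0 \<le> R 1"
proof (rule field_le_epsilon)
  fix e :: real
  assume "e > 0"
  obtain n :: nat where n: "max (1 / \<delta>) (2 * \<bar>M\<bar> * B / e) < n"
    using reals_Archimedean2 by blast
  have "0 < 1 / \<delta>" "1 / \<delta> < n"
    using \<open>\<delta> > 0\<close> n by simp_all
  then have "n > 0"
    by linarith
  with \<open>1 / \<delta> < n\<close> have "1 / n \<le> \<delta>"
    using \<open>\<delta> > 0\<close> by (simp add: field_simps)
  define h where "h i = R (i / n) + M / n * \<beta> (i / n)" for i :: nat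
  \<comment> \<open>the error terms of the steps telescope\<close>
  have h_mono: "h i \<le> h (Suc i)" if "i \<in> {0..<n}" for i
    using step[of "i / n" "Suc i / n"] that \<open>1 / n \<le> \<delta>\<close>
    by (simp add: h_def divide_right_mono diff_divide_distrib[symmetric] algebra_simps)
      (simp add: diff_divide_distrib)
  have "h 0 \<le> h n"
    using lift_Suc_mono_le_ivl[where N="{0..<n}" and f=h, OF h_mono] by simp
  then have "R 0 \<le> R 1 + M / n * (\<beta> 1 - \<beta> 0)"
    using \<open>n > 0\<close> by (simp add: h_def algebra_simps)
  also have "M / n * (\<beta> 1 - \<beta> 0) \<le> \<bar>M\<bar> / n * (2 * B)"
  proof -
    have "\<bar>\<beta> 1 - \<beta> 0\<bar> \<le> 2 * B"
      using \<beta>[of 0] \<beta>[of 1] by simp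
    then have "M * (\<beta> 1 - \<beta> 0) \<le> \<bar>M\<bar> * (2 * B)"
      by (metis abs_ge_self abs_ge_zero abs_mult mult_left_mono order_trans)
    then show ?thesis
      by (simp add: divide_right_mono)
  qed
  also have "\<bar>M\<bar> / n * (2 * B) \<le> e"
    using n \<open>n > 0\<close> \<open>e > 0\<close> by (simp add: field_simps)
  finally show "R 0 \<le> R 1 + e"
    by simp
qed

lemma norm_ratio_mono_on_segment:
  fixes T :: "'a::real_normed_vector \<Rightarrow> 'a"
  assumes T: "bounded_linear T"
    and nonzero: "\<And>t. t \<in> {0..1} \<Longrightarrow> x + t *\<^sub>R (y - x) \<noteq> 0"
    and pres: "\<And>t. t \<in> {0..1} \<Longrightarrow> preserves_bj_at T (x + t *\<^sub>R (y - x))"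
  shows "norm (T x) / norm x \<le> norm (T y) / norm y"
proof -
  define d where "d = y - x"
  define f where "f t = norm (x + t *\<^sub>R d)" for t
  have "continuous_on {0..1} f"
    unfolding f_def by (intro continuous_intros)
  then obtain t\<^sub>0 where "t\<^sub>0 \<in> {0..1}" and t\<^sub>0: "\<And>t. t \<in> {0..1} \<Longrightarrow> f t\<^sub>0 \<le> f t"
    using continuous_attains_inf[of "{0..1}" f] by auto
  define m where "m = f t\<^sub>0"
  have "m > 0"
    using nonzero[OF \<open>t\<^sub>0 \<in> {0..1}\<close>] by (simp add: m_def f_def d_def)
  obtain C where C: "\<And>v. norm (T v) \<le> C * norm v"
    using bounded_linear.bounded[OF T] by (metis mult.commute)
  obtain \<beta> where \<beta>: "\<And>t. \<bar>\<beta> t\<bar> \<le> norm d"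
    and support: "\<And>t u. norm (x + t *\<^sub>R d) + \<beta> t * u \<le> norm (x + (t + u) *\<^sub>R d)"
    using norm_line_supporting_slopes[of d x] by metis
  define \<delta> where "\<delta> = m / (2 * (norm d + 1))"
  have "norm (T (x + 0 *\<^sub>R d)) / f 0 \<le> norm (T (x + 1 *\<^sub>R d)) / f 1"
  proof (rule le_by_fine_steps[where \<delta> = \<delta> and \<beta> = \<beta> and M = "C / (m / 2)"])
    show "\<delta> > 0"
      using \<open>m > 0\<close> by (simp add: \<delta>_def add_nonneg_pos)
  next
    fix t s :: real
    assume ts: "0 \<le> t" "t \<le> s" "s \<le> 1" "s - t \<le> \<delta>"
    have "(s - t) * \<bar>\<beta> t\<bar> \<le> \<delta> * (norm d + 1)"
      using ts \<beta>[of t] by (intro mult_mono) auto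
    also have "\<dots> = m / 2"
    proof -
      have "norm d + 1 > 0"
        by (simp add: add_nonneg_pos)
      then show ?thesis
        by (simp add: \<delta>_def field_simps)
    qed
    moreover have "- ((s - t) * \<bar>\<beta> t\<bar>) \<le> (s - t) * \<beta> t"
      using ts mult_left_mono[of "- \<bar>\<beta> t\<bar>" "\<beta> t" "s - t"] by simp
    ultimately have "m / 2 \<le> f t + (s - t) * \<beta> t"
      using t\<^sub>0[of t] ts by (simp add: m_def)
    with \<open>m > 0\<close> show "norm (T (x + t *\<^sub>R d)) / f t
        \<le> norm (T (x + s *\<^sub>R d)) / f s + C / (m / 2) * (s - t) * (\<beta> s - \<beta> t)"
      unfolding f_def using pres ts support C
      by (intro norm_ratio_step[OF bounded_linear.linear[OF T]]) (auto simp: d_def)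
  qed (use \<beta> in blast)
  then show ?thesis
    by (simp add: f_def d_def)
qed

lemma norm_ratio_const_on_convex:
  fixes T :: "'a::real_normed_vector \<Rightarrow> 'a"
  assumes T: "bounded_linear T" and S: "convex S" "0 \<notin> S"
    and pres: "\<And>z. z \<in> S \<Longrightarrow> preserves_bj_at T z"
    and "x \<in> S" "y \<in> S"
  shows "norm (T x) / norm x = norm (T y) / norm y"
proof -
  have "norm (T a) / norm a \<le> norm (T b) / norm b" if "a \<in> S" "b \<in> S" for a b
  proof (rule norm_ratio_mono_on_segment[OF T])
    fix t :: real
    assume "t \<in> {0..1}"
    then have "(1 - t) *\<^sub>R a + t *\<^sub>R b \<in> S"
      using S(1) that by (simp add: convex_alt)
    moreover have "(1 - t) *\<^sub>R a + t *\<^sub>R b = a + t *\<^sub>R (b - a)"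
      by (simp add: algebra_simps)
    ultimately show "a + t *\<^sub>R (b - a) \<noteq> 0" "preserves_bj_at T (a + t *\<^sub>R (b - a))"
      using S(2) pres by auto
  qed
  with assms(5,6) show ?thesis
    by (meson antisym)
qed

lemma closure_nonvanishing_set:
  fixes \<phi> :: "'a::real_normed_vector \<Rightarrow> real"
  assumes \<phi>: "linear \<phi>" and "\<phi> \<noteq> (\<lambda>x. 0)"
  shows "closure {x. \<phi> x \<noteq> 0} = UNIV"
proof -
  obtain h where h: "\<phi> h \<noteq> 0"
    using assms(2) by auto
  then have "h \<noteq> 0"
    using linear_0[OF \<phi>] by auto
  have "x \<in> closure {x. \<phi> x \<noteq> 0}" for x
  proof (cases "\<phi> x = 0")
    case True
    show ?thesis
    proof (rule closure_approachable[THEN iffD2], intro allI impI)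
      fix e :: real
      assume "e > 0"
      define y where "y = x + (e / (2 * norm h)) *\<^sub>R h"
      have "\<phi> y \<noteq> 0"
        using True h \<open>e > 0\<close> \<open>h \<noteq> 0\<close> by (simp add: y_def linear_add[OF \<phi>] linear_scale[OF \<phi>])
      moreover have "dist y x < e"
        using \<open>e > 0\<close> \<open>h \<noteq> 0\<close> by (simp add: y_def dist_norm)
      ultimately show "\<exists>y\<in>{x. \<phi> x \<noteq> 0}. dist y x < e"
        by blast
    qed
  qed (simp add: closure_subset[THEN subsetD])
  then show ?thesis
    by blast
qed

lemma norm_proportional_off_kernel:
  fixes T :: "'a::real_normed_vector \<Rightarrow> 'a" and \<phi> :: "'a \<Rightarrow> real"
  assumes T: "bounded_linear T" and \<phi>: "linear \<phi>" and h: "\<phi> h > 0"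
    and pres: "\<And>z. \<phi> z \<noteq> 0 \<Longrightarrow> preserves_bj_at T z"
    and z: "\<phi> z \<noteq> 0"
  shows "norm (T z) = norm (T h) / norm h * norm z"
proof -
  have "convex {z. \<phi> z > 0}"
    using convex_linear_vimage[OF \<phi>, of "{0<..}"] by (simp add: vimage_def)
  then have ratio: "norm (T w) / norm w = norm (T h) / norm h" if "\<phi> w > 0" for w
    using that h pres linear_0[OF \<phi>] by (intro norm_ratio_const_on_convex[OF T]) auto
  have on_halfspace: "norm (T w) = norm (T h) / norm h * norm w" if "\<phi> w > 0" for w
  proof -
    have "w \<noteq> 0"
      using that linear_0[OF \<phi>] by auto
    with ratio[OF that] show ?thesis
      by (simp add: divide_eq_eq)
  qed
  show ?thesis
  proof (cases "\<phi> z > 0")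
    case False
    with z have "\<phi> (- z) > 0"
      by (simp add: linear_neg[OF \<phi>])
    then show ?thesis
      using on_halfspace[of "- z"] by (simp add: linear_neg[OF bounded_linear.linear[OF T]])
  qed (rule on_halfspace)
qed

theorem mainTheorem8:
  fixes T :: "'a::banach \<Rightarrow> 'a" and \<phi> :: "'a \<Rightarrow> real" and c :: real
  assumes "gdelta_in euclidean (smooth_points :: 'a set)"
    and "closure (smooth_points :: 'a set) = UNIV"
    and "bounded_linear \<phi>" and "\<phi> \<noteq> (\<lambda>x. 0)" and "c \<noteq> 0"
    and "bounded_linear T"
    and "\<forall>x\<in>{x. \<phi> x = c}. preserves_bj_at T x"
  shows "\<exists>k::real\<ge>0. \<forall>x. norm (T x) = k * norm x"
proof -
  have \<phi>: "linear \<phi>" and T: "linear T"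
    using assms(3,6) bounded_linear.linear by blast+
  obtain h where "\<phi> h \<noteq> 0"
    using assms(4) by auto
  then obtain h where h: "\<phi> h > 0"
    by (metis linear_neg[OF \<phi>] neg_0_less_iff_less not_less_iff_gr_or_eq)
  define k where "k = norm (T h) / norm h"
  have "{z. \<phi> z \<noteq> 0} \<subseteq> {z. norm (T z) = k * norm z}"
    unfolding k_def using norm_proportional_off_kernel[OF assms(6) \<phi> h]
      preserves_bj_at_off_kernel[OF T \<phi> assms(5,7)] by blast
  moreover have "closed {z. norm (T z) = k * norm z}"
    by (intro closed_Collect_eq continuous_on_norm linear_continuous_on assms(6) continuous_intros)
  ultimately have "closure {z. \<phi> z \<noteq> 0} \<subseteq> {z. norm (T z) = k * norm z}"
    by (rule closure_minimal)
  moreover have "k \<ge> 0"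
    by (simp add: k_def)
  ultimately show ?thesis
    using closure_nonvanishing_set[OF \<phi> assms(4)] by blast
qed

end
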